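(* Let $G$ be a strongly Deza graph with parameters $(n,k,b,a)$. Then: (i) $G$ has at most five distinct eigenvalues. (ii) If $G$ has exactly two distinct eigenvalues, then $a=0$, $b=k-1\geqslant 1$, and $G$ is a disjoint union of (at least two) cliques of order $k+1$. (iii) If $G$ has exactly three distinct eigenvalues, then one of the following holds: $G$ is a strongly regular graph with parameters $(n,k,\lambda,\mu)$ where $\{\lambda,\mu\}=\{a,b\}$; or $G$ is disconnected and each connected component is a strongly regular graph with parameters $(v,k,b,b)$ for some $v$; or each connected component of $G$ is a complete bipartite graph $K_{k,k}$ with $k\geqslant 2$.
   Context: All graphs are finite, simple and undirected; eigenvalues of a graph are those of its adjacency matrix. A Deza graph with parameters $(n,k,b,a)$, where $b\geqslant a$, is a $k$-regular graph on $n$ vertices, which is neither complete nor edgeless, such that any two distinct vertices have exactly $b$ or exactly $a$ common neighbours. If $b>a$, the children $G_A$ and $G_B$ of $G$ are the graphs on the vertex set of $G$ in which two distinct vertices are adjacent if and only if they have exactly $a$ (for $G_A$), respectively exactly $b$ (for $G_B$), common neighbours in $G$; if $b=a$, $G_A$ is the complete graph and $G_B$ is the edgeless graph. A strongly regular graph with parameters $(n,k,\lambda,\mu)$ is a $k$-regular graph on $n$ vertices, neither complete nor edgeless, in which any two adjacent vertices have exactly $\lambda$ common neighbours and any two distinct non-adjacent vertices have exactly $\mu$ common neighbours (disconnected examples, i.e. disjoint unions of at least two cliques of equal size, are allowed). A strongly Deza graph is a Deza graph both of whose children are strongly regular graphs. *)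

theory Defs
  imports "HOL-Analysis.Analysis"
begin

text \<open>A finite simple graph on the vertices of a finite type 'a, given by its
adjacency relation E (symmetric, irreflexive). Notions relative to a vertex set V
refer to the subgraph induced on V.\<close>

definition simple_graph :: "('a \<Rightarrow> 'a \<Rightarrow> bool) \<Rightarrow> bool" where
  "simple_graph E \<longleftrightarrow> (\<forall>x y. E x y \<longrightarrow> E y x) \<and> (\<forall>x. \<not> E x x)"

definition nbrs :: "'a set \<Rightarrow> ('a \<Rightarrow> 'a \<Rightarrow> bool) \<Rightarrow> 'a \<Rightarrow> 'a set" where
  "nbrs V E x = {y \<in> V. E x y}"

definition common :: "'a set \<Rightarrow> ('a \<Rightarrow> 'a \<Rightarrow> bool) \<Rightarrow> 'a \<Rightarrow> 'a \<Rightarrow> nat" where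
  "common V E x y = card {z \<in> V. E x z \<and> E y z}"

definition regular_on :: "'a set \<Rightarrow> ('a \<Rightarrow> 'a \<Rightarrow> bool) \<Rightarrow> nat \<Rightarrow> bool" where
  "regular_on V E k \<longleftrightarrow> (\<forall>x\<in>V. card (nbrs V E x) = k)"

definition complete_on :: "'a set \<Rightarrow> ('a \<Rightarrow> 'a \<Rightarrow> bool) \<Rightarrow> bool" where
  "complete_on V E \<longleftrightarrow> (\<forall>x\<in>V. \<forall>y\<in>V. x \<noteq> y \<longrightarrow> E x y)"

definition edgeless_on :: "'a set \<Rightarrow> ('a \<Rightarrow> 'a \<Rightarrow> bool) \<Rightarrow> bool" where
  "edgeless_on V E \<longleftrightarrow> (\<forall>x\<in>V. \<forall>y\<in>V. \<not> E x y)"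

definition deza_on :: "'a set \<Rightarrow> ('a \<Rightarrow> 'a \<Rightarrow> bool) \<Rightarrow> nat \<Rightarrow> nat \<Rightarrow> nat \<Rightarrow> nat \<Rightarrow> bool" where
  "deza_on V E n k b a \<longleftrightarrow> card V = n \<and> regular_on V E k \<and> b \<ge> a \<and>
     \<not> complete_on V E \<and> \<not> edgeless_on V E \<and>
     (\<forall>x\<in>V. \<forall>y\<in>V. x \<noteq> y \<longrightarrow> common V E x y = b \<or> common V E x y = a)"

text \<open>Strongly regular graph with parameters (n,k,lambda,mu) (disconnected ones allowed).\<close>
definition srg_on :: "'a set \<Rightarrow> ('a \<Rightarrow> 'a \<Rightarrow> bool) \<Rightarrow> nat \<Rightarrow> nat \<Rightarrow> nat \<Rightarrow> nat \<Rightarrow> bool" where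
  "srg_on V E n k l m \<longleftrightarrow> card V = n \<and> regular_on V E k \<and>
     \<not> complete_on V E \<and> \<not> edgeless_on V E \<and>
     (\<forall>x\<in>V. \<forall>y\<in>V. x \<noteq> y \<longrightarrow> E x y \<longrightarrow> common V E x y = l) \<and>
     (\<forall>x\<in>V. \<forall>y\<in>V. x \<noteq> y \<longrightarrow> \<not> E x y \<longrightarrow> common V E x y = m)"

definition childA :: "'a set \<Rightarrow> ('a \<Rightarrow> 'a \<Rightarrow> bool) \<Rightarrow> nat \<Rightarrow> nat \<Rightarrow> 'a \<Rightarrow> 'a \<Rightarrow> bool" where
  "childA V E b a x y \<longleftrightarrow> (if b > a then x \<noteq> y \<and> common V E x y = a else x \<noteq> y)"

definition childB :: "'a set \<Rightarrow> ('a \<Rightarrow> 'a \<Rightarrow> bool) \<Rightarrow> nat \<Rightarrow> nat \<Rightarrow> 'a \<Rightarrow> 'a \<Rightarrow> bool" where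
  "childB V E b a x y \<longleftrightarrow> (if b > a then x \<noteq> y \<and> common V E x y = b else False)"

definition strongly_deza :: "('a::finite \<Rightarrow> 'a \<Rightarrow> bool) \<Rightarrow> nat \<Rightarrow> nat \<Rightarrow> nat \<Rightarrow> nat \<Rightarrow> bool" where
  "strongly_deza E n k b a \<longleftrightarrow> simple_graph E \<and> deza_on UNIV E n k b a \<and>
     (\<exists>n1 k1 l1 m1. srg_on UNIV (childA UNIV E b a) n1 k1 l1 m1) \<and>
     (\<exists>n2 k2 l2 m2. srg_on UNIV (childB UNIV E b a) n2 k2 l2 m2)"

definition adj_matrix :: "('a::finite \<Rightarrow> 'a \<Rightarrow> bool) \<Rightarrow> real^'a^'a" where
  "adj_matrix E = (\<chi> x y. if E x y then 1 else 0)"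

definition eigenvalues :: "('a::finite \<Rightarrow> 'a \<Rightarrow> bool) \<Rightarrow> real set" where
  "eigenvalues E = {c. \<exists>v. v \<noteq> 0 \<and> adj_matrix E *v v = c *\<^sub>R v}"

definition components :: "('a \<Rightarrow> 'a \<Rightarrow> bool) \<Rightarrow> 'a set set" where
  "components E = {{y. E\<^sup>*\<^sup>* x y} | x. True}"

definition complete_bipartite_on :: "'a set \<Rightarrow> ('a \<Rightarrow> 'a \<Rightarrow> bool) \<Rightarrow> nat \<Rightarrow> bool" where
  "complete_bipartite_on C E k \<longleftrightarrow> (\<exists>X Y. X \<inter> Y = {} \<and> X \<union> Y = C \<and> card X = k \<and> card Y = k \<and>
     (\<forall>x\<in>C. \<forall>y\<in>C. E x y \<longleftrightarrow> (x \<in> X \<and> y \<in> Y) \<or> (x \<in> Y \<and> y \<in> X)))"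

end

(* Let A and B be the adjacency operators of G and of its child G_B. On functions of sum zero,
   A^2 - (k - a) acts as (b - a) B, and B satisfies a quadratic equation there because G_B is
   strongly regular. Hence A is annihilated by (A - k)(A^2 - t1)(A^2 - t2); as A is symmetric, its
   eigenvalues are among the at most five real roots, and the product of the A - theta over the
   distinct eigenvalues theta vanishes.
   With two eigenvalues this gives A^2 = (k - 1) A + k I, so G is a union of cliques K_(k+1).
   With three eigenvalues, either k is a simple eigenvalue, (A - theta)(A - theta') is a multiple
   of J and G is strongly regular, or G is disconnected. Then a = 0, G_B is a disjoint union of
   cliques and A^2 = k I + b B, so every eigenvalue squares to k^2 or k - b. The spectrum
   {k, s, -s} with s^2 = k - b makes the cliques of G_B the components, with parameters
   (v, k, b, b); the spectrum {k, -k, c} forces c = 0 and components K_(k,k). *)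

theory Submission
  imports Defs
begin

section \<open>The adjacency operator on real functions\<close>

text \<open>Functions \<open>'a \<Rightarrow> real\<close> play the role of vectors: \<open>adj_op R\<close> is multiplication by the adjacency
  matrix \<open>A\<close>, \<open>adj_shift R \<rho>\<close> is \<open>A - \<rho>\<close> and \<open>adj_prod R \<rho>s\<close> is the product of the \<open>A - \<rho>\<close>
  for \<open>\<rho>\<close> in \<open>\<rho>s\<close>.\<close>

definition adj_op :: "('a::finite \<Rightarrow> 'a \<Rightarrow> bool) \<Rightarrow> ('a \<Rightarrow> real) \<Rightarrow> 'a \<Rightarrow> real" where
  "adj_op R f x = (\<Sum>y\<in>UNIV. if R x y then f y else 0)"

lemma sum_if_const_eq_card:
  "(\<Sum>y\<in>(UNIV::'a::finite set). if P y then c else 0) = real (card {y. P y}) * (c::real)"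
  by (simp add: sum.If_cases)

lemma adj_op_eq_sum_nbrs: "adj_op R f x = (\<Sum>y\<in>{y. R x y}. f y)"
  by (simp add: adj_op_def sum.If_cases)

lemma adj_op_diff_scale: "adj_op R (\<lambda>y. f y - c * g y) = (\<lambda>x. adj_op R f x - c * adj_op R g x)"
  by (auto simp: fun_eq_iff adj_op_def sum_subtractf[symmetric] sum_distrib_left intro!: sum.cong)

lemma adj_op_scale: "adj_op R (\<lambda>y. c * f y) = (\<lambda>x. c * adj_op R f x)"
  by (auto simp: fun_eq_iff adj_op_def sum_distrib_left intro!: sum.cong)

lemma adj_op_const: "adj_op R (\<lambda>y. c) x = real (card {y. R x y}) * c"
  unfolding adj_op_def by (rule sum_if_const_eq_card)

lemma adj_op_indicator: "adj_op R (indicator {z}) x = (if R x z then 1 else 0)"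
proof -
  have "adj_op R (indicator {z}) x = (\<Sum>y\<in>UNIV. if y = z then (if R x y then 1 else 0) else 0)"
    unfolding adj_op_def by (rule sum.cong) auto
  then show ?thesis by simp
qed

lemma adj_op_indicator_set: "adj_op R (indicator S) x = real (card {y. R x y \<and> y \<in> S})"
proof -
  have "adj_op R (indicator S) x = (\<Sum>y\<in>UNIV. if R x y \<and> y \<in> S then 1 else 0)"
    unfolding adj_op_def by (rule sum.cong) (auto simp: indicator_def)
  then show ?thesis
    by (simp add: sum_if_const_eq_card)
qed

lemma adj_op_adj_op: "adj_op R (adj_op R f) x = (\<Sum>z\<in>UNIV. real (card {y. R x y \<and> R y z}) * f z)"
proof -
  have "adj_op R (adj_op R f) x = (\<Sum>y\<in>UNIV. \<Sum>z\<in>UNIV. if R x y \<and> R y z then f z else 0)"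
    unfolding adj_op_def by (auto simp: sum_distrib_left if_distrib intro!: sum.cong)
  also have "\<dots> = (\<Sum>z\<in>UNIV. \<Sum>y\<in>UNIV. if R x y \<and> R y z then f z else 0)"
    by (rule sum.swap)
  also have "\<dots> = (\<Sum>z\<in>UNIV. real (card {y. R x y \<and> R y z}) * f z)"
    by (intro sum.cong refl sum_if_const_eq_card)
  finally show ?thesis .
qed

lemma adj_op_adj_op_indicator: "adj_op R (adj_op R (indicator {z})) x = real (card {y. R x y \<and> R y z})"
proof -
  have "adj_op R (adj_op R (indicator {z})) x
      = (\<Sum>w\<in>UNIV. if w = z then real (card {y. R x y \<and> R y w}) else 0)"
    unfolding adj_op_adj_op by (rule sum.cong) auto
  then show ?thesis by simp
qed

lemma sum_adj_op_regular:
  assumes "\<And>x y. R x y \<Longrightarrow> R y x" and "\<And>x. card {y. R x y} = d"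
  shows "(\<Sum>x\<in>UNIV. adj_op R f x) = real d * (\<Sum>y\<in>UNIV. f y)"
proof -
  have "(\<Sum>x\<in>UNIV. adj_op R f x) = (\<Sum>y\<in>UNIV. \<Sum>x\<in>UNIV. if R x y then f y else 0)"
    unfolding adj_op_def by (rule sum.swap)
  also have "\<dots> = (\<Sum>y\<in>UNIV. real (card {x. R x y}) * f y)"
    by (intro sum.cong refl sum_if_const_eq_card)
  also have "\<dots> = real d * (\<Sum>y\<in>UNIV. f y)"
  proof -
    have "{x. R x y} = {x. R y x}" for y
      using assms(1) by blast
    then show ?thesis
      using assms(2) by (simp add: sum_distrib_left)
  qed
  finally show ?thesis .
qed

lemma adj_op_self_adjoint:
  assumes "\<And>x y. R x y \<Longrightarrow> R y x"
  shows "(\<Sum>x\<in>UNIV. g x * adj_op R h x) = (\<Sum>x\<in>UNIV. h x * adj_op R g x)"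
proof -
  have "(\<Sum>x\<in>UNIV. g x * adj_op R h x) = (\<Sum>x\<in>UNIV. \<Sum>y\<in>UNIV. if R x y then g x * h y else 0)"
    unfolding adj_op_def by (auto simp: sum_distrib_left intro!: sum.cong)
  also have "\<dots> = (\<Sum>y\<in>UNIV. \<Sum>x\<in>UNIV. if R x y then g x * h y else 0)"
    by (rule sum.swap)
  also have "\<dots> = (\<Sum>y\<in>UNIV. h y * adj_op R g y)"
    unfolding adj_op_def using assms by (auto simp: sum_distrib_left intro!: sum.cong)
  finally show ?thesis .
qed

section \<open>Polynomials in the adjacency operator\<close>

definition adj_shift :: "('a::finite \<Rightarrow> 'a \<Rightarrow> bool) \<Rightarrow> real \<Rightarrow> ('a \<Rightarrow> real) \<Rightarrow> 'a \<Rightarrow> real" where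
  "adj_shift R \<rho> f = (\<lambda>x. adj_op R f x - \<rho> * f x)"

fun adj_prod :: "('a::finite \<Rightarrow> 'a \<Rightarrow> bool) \<Rightarrow> real list \<Rightarrow> ('a \<Rightarrow> real) \<Rightarrow> 'a \<Rightarrow> real" where
  "adj_prod R [] f = f"
| "adj_prod R (\<rho> # \<rho>s) f = adj_shift R \<rho> (adj_prod R \<rho>s f)"

definition adj_eigenvalues :: "('a::finite \<Rightarrow> 'a \<Rightarrow> bool) \<Rightarrow> real set" where
  "adj_eigenvalues R = {c. \<exists>f. f \<noteq> (\<lambda>_. 0) \<and> adj_op R f = (\<lambda>x. c * f x)}"

lemma adj_shift_diff_scale:
  "adj_shift R \<rho> (\<lambda>x. f x - c * g x) = (\<lambda>x. adj_shift R \<rho> f x - c * adj_shift R \<rho> g x)"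
  by (auto simp: adj_shift_def adj_op_diff_scale algebra_simps)

lemma adj_shift_adj_shift:
  "adj_shift R \<theta> (adj_shift R \<theta>' f) x
     = adj_op R (adj_op R f) x - (\<theta> + \<theta>') * adj_op R f x + \<theta> * \<theta>' * f x"
  by (simp add: adj_shift_def adj_op_diff_scale algebra_simps)

lemma adj_shift_commute: "adj_shift R \<rho> (adj_shift R \<sigma> f) = adj_shift R \<sigma> (adj_shift R \<rho> f)"
  by (rule ext) (simp add: adj_shift_adj_shift algebra_simps)

lemma adj_prod_adj_shift: "adj_prod R \<rho>s (adj_shift R \<sigma> f) = adj_shift R \<sigma> (adj_prod R \<rho>s f)"
  by (induction \<rho>s) (simp_all add: adj_shift_commute)

lemma adj_prod_append: "adj_prod R (\<rho>s @ \<sigma>s) f = adj_prod R \<rho>s (adj_prod R \<sigma>s f)"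
  by (induction \<rho>s) simp_all

lemma adj_prod_remove1:
  "\<rho> \<in> set \<rho>s \<Longrightarrow> adj_prod R \<rho>s f = adj_shift R \<rho> (adj_prod R (remove1 \<rho> \<rho>s) f)"
  by (induction \<rho>s) (auto simp: adj_shift_commute)

lemma adj_prod_mset_eq: "mset \<rho>s = mset \<sigma>s \<Longrightarrow> adj_prod R \<rho>s f = adj_prod R \<sigma>s f"
proof (induction \<rho>s arbitrary: \<sigma>s)
  case (Cons \<rho> \<rho>s)
  then have "\<rho> \<in> set \<sigma>s"
    by (metis list.set_intros(1) set_mset_mset)
  moreover have "mset \<rho>s = mset (remove1 \<rho> \<sigma>s)"
    by (simp add: Cons.prems[symmetric])
  then have "adj_prod R \<rho>s f = adj_prod R (remove1 \<rho> \<sigma>s) f"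
    by (rule Cons.IH)
  ultimately show ?case
    using adj_prod_remove1[of \<rho> \<sigma>s R f] by simp
qed simp

lemma adj_prod_diff_scale:
  "adj_prod R \<rho>s (\<lambda>x. f x - c * g x) = (\<lambda>x. adj_prod R \<rho>s f x - c * adj_prod R \<rho>s g x)"
  by (induction \<rho>s) (simp_all add: adj_shift_diff_scale)

lemma adj_prod_eigenvector:
  assumes "adj_op R f = (\<lambda>x. c * f x)"
  shows "adj_prod R \<rho>s f = (\<lambda>x. (\<Prod>\<rho>\<leftarrow>\<rho>s. c - \<rho>) * f x)"
proof (induction \<rho>s)
  case (Cons \<rho> \<rho>s)
  have "adj_shift R \<rho> (\<lambda>x. p * f x) = (\<lambda>x. (c - \<rho>) * p * f x)" for p
    unfolding adj_shift_def by (rule ext) (simp only: adj_op_scale, simp add: assms algebra_simps)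
  then show ?case
    using Cons by simp
qed simp

lemma adj_eigenvalues_subset_roots:
  assumes "\<And>f. adj_prod R \<rho>s f = (\<lambda>_. 0)"
  shows "adj_eigenvalues R \<subseteq> set \<rho>s"
proof
  fix c assume "c \<in> adj_eigenvalues R"
  then obtain f where f: "f \<noteq> (\<lambda>_. 0)" "adj_op R f = (\<lambda>x. c * f x)"
    by (auto simp: adj_eigenvalues_def)
  then obtain x where "f x \<noteq> 0" by auto
  moreover have "(\<Prod>\<rho>\<leftarrow>\<rho>s. c - \<rho>) * f x = 0"
    using assms[of f] adj_prod_eigenvector[OF f(2), of \<rho>s] by (metis (no_types))
  ultimately show "c \<in> set \<rho>s"
    by (auto simp: prod_list_zero_iff)
qed

lemma adj_shift_eq_0_imp_eq_0:
  assumes "c \<notin> adj_eigenvalues R" and "adj_shift R c g = (\<lambda>_. 0)"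
  shows "g = (\<lambda>_. 0)"
proof (rule ccontr)
  assume "g \<noteq> (\<lambda>_. 0)"
  moreover have "adj_op R g = (\<lambda>x. c * g x)"
    using assms(2) by (auto simp: adj_shift_def fun_eq_iff)
  ultimately show False
    using assms(1) by (auto simp: adj_eigenvalues_def)
qed

text \<open>Symmetry makes the shifted operator self-adjoint, so the square of \<open>Z = (A - \<rho>) Y\<close>
  sums to \<open>\<langle>Y, (A - \<rho>) Z\<rangle> = 0\<close>.\<close>
lemma adj_shift_square_eq_0:
  assumes sym: "\<And>x y. R x y \<Longrightarrow> R y x"
    and "adj_shift R \<rho> (adj_shift R \<rho> Y) = (\<lambda>_. 0)"
  shows "adj_shift R \<rho> Y = (\<lambda>_. 0)"
proof -
  define Z where "Z = adj_shift R \<rho> Y"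
  have "(\<Sum>x\<in>UNIV. Z x * Z x) = (\<Sum>x\<in>UNIV. Z x * adj_op R Y x - \<rho> * (Z x * Y x))"
    by (rule sum.cong) (simp_all add: Z_def adj_shift_def algebra_simps)
  also have "\<dots> = (\<Sum>x\<in>UNIV. Z x * adj_op R Y x) - \<rho> * (\<Sum>x\<in>UNIV. Z x * Y x)"
    by (simp add: sum_subtractf sum_distrib_left)
  also have "\<dots> = (\<Sum>x\<in>UNIV. Y x * adj_op R Z x) - \<rho> * (\<Sum>x\<in>UNIV. Y x * Z x)"
    using adj_op_self_adjoint[of R Z Y, OF sym] by (simp add: mult.commute)
  also have "\<dots> = (\<Sum>x\<in>UNIV. Y x * adj_shift R \<rho> Z x)"
    by (simp add: adj_shift_def algebra_simps sum_subtractf sum_distrib_left)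
  also have "\<dots> = 0"
    using assms(2) by (simp add: Z_def)
  finally have "\<forall>x\<in>UNIV. Z x * Z x = 0"
    by (subst sum_nonneg_eq_0_iff[symmetric]) auto
  then show ?thesis
    by (auto simp: Z_def)
qed

text \<open>Symmetric operators are semisimple: from any annihilating product of shifts one may drop
  the factors that are not eigenvalues and all repetitions.\<close>
lemma adj_prod_annihilator_eigenvalues:
  assumes sym: "\<And>x y. R x y \<Longrightarrow> R y x"
    and "\<And>f. adj_prod R (\<rho>s @ \<sigma>s) f = (\<lambda>_. 0)"
  shows "adj_prod R (remdups (filter (\<lambda>\<rho>. \<rho> \<in> adj_eigenvalues R) \<rho>s) @ \<sigma>s) f = (\<lambda>_. 0)"
  using assms(2)
proof (induction \<rho>s arbitrary: \<sigma>s f)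
  case (Cons \<rho> \<rho>s)
  define L where "L = remdups (filter (\<lambda>\<rho>. \<rho> \<in> adj_eigenvalues R) \<rho>s)"
  show ?case
  proof (cases "\<rho> \<in> adj_eigenvalues R")
    case False
    then have "adj_prod R (\<rho>s @ \<sigma>s) f = (\<lambda>_. 0)" for f
      using adj_shift_eq_0_imp_eq_0[OF False] Cons.prems[of f] by simp
    then show ?thesis
      using Cons.IH False by simp
  next
    case True
    have "adj_prod R (\<rho>s @ \<rho> # \<sigma>s) f = (\<lambda>_. 0)" for f
      using Cons.prems by (simp add: adj_prod_append adj_prod_adj_shift)
    then have IH: "adj_prod R (L @ \<rho> # \<sigma>s) f = (\<lambda>_. 0)" for f
      using Cons.IH unfolding L_def by blast
    show ?thesis
    proof (cases "\<rho> \<in> set L")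
      case False
      then show ?thesis
        using True IH by (simp add: L_def adj_prod_append adj_prod_adj_shift)
    next
      case rho_in: True
      define Y where "Y = adj_prod R (remove1 \<rho> L) (adj_prod R \<sigma>s f)"
      have L_Y: "adj_prod R (L @ \<sigma>s) f = adj_shift R \<rho> Y"
        unfolding Y_def adj_prod_append using adj_prod_remove1[OF rho_in] by blast
      have "adj_shift R \<rho> (adj_shift R \<rho> Y) = (\<lambda>_. 0)"
        using IH[of f] L_Y by (simp add: adj_prod_append adj_prod_adj_shift)
      then have "adj_prod R (L @ \<sigma>s) f = (\<lambda>_. 0)"
        using adj_shift_square_eq_0[OF sym] L_Y by simp
      then show ?thesis
        using True rho_in by (simp add: L_def)
    qed
  qed
qed simp

lemma adj_prod_distinct_eigenvalues_eq_0:
  assumes sym: "\<And>x y. R x y \<Longrightarrow> R y x"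
    and ann: "\<And>f. adj_prod R \<rho>s f = (\<lambda>_. 0)"
    and "distinct \<theta>s" and "set \<theta>s = adj_eigenvalues R"
  shows "adj_prod R \<theta>s f = (\<lambda>_. 0)"
proof -
  define L where "L = remdups (filter (\<lambda>\<rho>. \<rho> \<in> adj_eigenvalues R) \<rho>s)"
  have "set L = set \<theta>s"
    using adj_eigenvalues_subset_roots[OF ann] assms(4) by (auto simp: L_def)
  then have "mset L = mset \<theta>s"
    using assms(3) set_eq_iff_mset_eq_distinct[of L \<theta>s] by (simp add: L_def)
  moreover have "adj_prod R L f = (\<lambda>_. 0)"
    using adj_prod_annihilator_eigenvalues[of R \<rho>s "[]"] sym ann by (simp add: L_def)
  ultimately show ?thesis
    using adj_prod_mset_eq by metis
qed

definition adj_sq_shift :: "('a::finite \<Rightarrow> 'a \<Rightarrow> bool) \<Rightarrow> real \<Rightarrow> ('a \<Rightarrow> real) \<Rightarrow> 'a \<Rightarrow> real" where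
  "adj_sq_shift R t f = (\<lambda>x. adj_op R (adj_op R f) x - t * f x)"

definition square_roots :: "real \<Rightarrow> real list" where
  "square_roots t = (if t \<ge> 0 then [sqrt t, - sqrt t] else [])"

lemma adj_sq_shift_adj_shift: "adj_sq_shift R t (adj_shift R \<rho> f) = adj_shift R \<rho> (adj_sq_shift R t f)"
  unfolding adj_sq_shift_def adj_shift_def by (rule ext) (simp add: adj_op_diff_scale algebra_simps)

lemma adj_prod_adj_sq_shift: "adj_prod R \<rho>s (adj_sq_shift R t f) = adj_sq_shift R t (adj_prod R \<rho>s f)"
  by (induction \<rho>s) (simp_all add: adj_sq_shift_adj_shift)

lemma adj_shift_adj_shift_neg: "adj_shift R s (adj_shift R (- s) f) = adj_sq_shift R (s\<^sup>2) f"
  by (rule ext) (simp add: adj_sq_shift_def adj_shift_adj_shift power2_eq_square)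

lemma adj_prod_square_roots:
  "t \<ge> 0 \<Longrightarrow> adj_prod R (square_roots t) f = adj_sq_shift R t f"
  by (simp add: square_roots_def adj_shift_adj_shift_neg)

lemma adj_sq_shift_neg_eq_0_imp_eq_0:
  assumes sym: "\<And>x y. R x y \<Longrightarrow> R y x" and "t < 0" and "adj_sq_shift R t g = (\<lambda>_. 0)"
  shows "g = (\<lambda>_. 0)"
proof -
  have "0 = (\<Sum>x\<in>UNIV. g x * adj_sq_shift R t g x)"
    using assms(3) by simp
  also have "\<dots> = (\<Sum>x\<in>UNIV. g x * adj_op R (adj_op R g) x) - t * (\<Sum>x\<in>UNIV. g x * g x)"
    by (simp add: adj_sq_shift_def algebra_simps sum_subtractf sum_distrib_left)
  also have "(\<Sum>x\<in>UNIV. g x * adj_op R (adj_op R g) x) = (\<Sum>x\<in>UNIV. adj_op R g x * adj_op R g x)"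
    using adj_op_self_adjoint[of R g "adj_op R g"] sym by simp
  finally have "(\<Sum>x\<in>UNIV. adj_op R g x * adj_op R g x) + (- t) * (\<Sum>x\<in>UNIV. g x * g x) = 0"
    by simp
  moreover have "(\<Sum>x\<in>UNIV. adj_op R g x * adj_op R g x) \<ge> 0"
    by (simp add: sum_nonneg)
  ultimately have "(- t) * (\<Sum>x\<in>UNIV. g x * g x) \<le> 0"
    by linarith
  then have "(\<Sum>x\<in>UNIV. g x * g x) \<le> 0"
    using \<open>t < 0\<close> by (simp add: zero_le_mult_iff)
  then have "(\<Sum>x\<in>UNIV. g x * g x) = 0"
    by (simp add: antisym sum_nonneg)
  then have "\<forall>x\<in>UNIV. g x * g x = 0"
    by (subst sum_nonneg_eq_0_iff[symmetric]) auto
  then show ?thesis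
    by auto
qed

lemma adj_prod_square_roots_eq_0:
  assumes sym: "\<And>x y. R x y \<Longrightarrow> R y x" and "adj_sq_shift R t g = (\<lambda>_. 0)"
  shows "adj_prod R (square_roots t) g = (\<lambda>_. 0)"
  using assms adj_prod_square_roots[of t R g] adj_sq_shift_neg_eq_0_imp_eq_0[of R t g]
  by (cases "t \<ge> 0") (auto simp: square_roots_def)

lemma eigenvalues_eq_adj_eigenvalues: "eigenvalues E = adj_eigenvalues E"
proof -
  have adj: "(adj_matrix E *v v) $ x = adj_op E (\<lambda>y. v $ y) x" for v x
    unfolding matrix_vector_mult_def adj_matrix_def adj_op_def vec_lambda_beta by (rule sum.cong) auto
  show ?thesis
  proof (intro set_eqI iffI)
    fix c assume "c \<in> eigenvalues E"
    then obtain v where v: "v \<noteq> 0" "adj_matrix E *v v = c *\<^sub>R v"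
      by (auto simp: eigenvalues_def)
    have "(\<lambda>y. v $ y) \<noteq> (\<lambda>_. 0)"
      using v(1) by (metis vec_eq_iff zero_index)
    moreover have "adj_op E (\<lambda>y. v $ y) = (\<lambda>x. c * v $ x)"
      using v(2) by (auto simp: vec_eq_iff adj[symmetric])
    ultimately show "c \<in> adj_eigenvalues E"
      unfolding adj_eigenvalues_def by blast
  next
    fix c assume "c \<in> adj_eigenvalues E"
    then obtain f where f: "f \<noteq> (\<lambda>_. 0)" "adj_op E f = (\<lambda>x. c * f x)"
      by (auto simp: adj_eigenvalues_def)
    define v :: "real^'a" where "v = (\<chi> y. f y)"
    have "v \<noteq> 0"
      using f(1) by (auto simp: v_def vec_eq_iff)
    moreover have "adj_matrix E *v v = c *\<^sub>R v"
      using f(2) by (auto simp: vec_eq_iff adj v_def)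
    ultimately show "c \<in> eigenvalues E"
      unfolding eigenvalues_def by blast
  qed
qed

lemma adj_shift_adj_shift_indicator:
  "adj_shift R \<theta> (adj_shift R \<theta>' (indicator {z})) x
     = real (card {y. R x y \<and> R y z}) - (\<theta> + \<theta>') * (if R x z then 1 else 0)
       + \<theta> * \<theta>' * (if x = z then 1 else 0)"
  by (simp add: adj_shift_adj_shift adj_op_indicator adj_op_adj_op_indicator indicator_def)

lemma adj_op_adj_op_three_classes:
  assumes walks: "\<And>x z. card {y. R x y \<and> R y z} = (if x = z then d else if S x z then p else q)"
    and irrefl: "\<And>x. \<not> S x x"
  shows "adj_op R (adj_op R f) x
    = real q * (\<Sum>y\<in>UNIV. f y) + (real d - real q) * f x + (real p - real q) * adj_op S f x"
proof -
  have "real (card {y. R x y \<and> R y z}) * f z = real q * f z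
      + (if x = z then (real d - real q) * f z else 0)
      + (if S x z then (real p - real q) * f z else 0)" for z
    using irrefl[of x] by (auto simp: walks algebra_simps)
  then have "adj_op R (adj_op R f) x = (\<Sum>z\<in>UNIV. real q * f z
      + (if x = z then (real d - real q) * f z else 0)
      + (if S x z then (real p - real q) * f z else 0))"
    unfolding adj_op_adj_op by (intro sum.cong) auto
  also have "\<dots> = real q * (\<Sum>y\<in>UNIV. f y) + (real d - real q) * f x + (real p - real q) * adj_op S f x"
  proof -
    have "(real p - real q) * adj_op S f x = (\<Sum>z\<in>UNIV. if S x z then (real p - real q) * f z else 0)"
      unfolding adj_op_def sum_distrib_left by (rule sum.cong) auto
    then show ?thesis
      unfolding sum.distrib by (simp add: sum_distrib_left)
  qed
  finally show ?thesis .
qed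

lemma sum_adj_shift_regular:
  assumes "\<And>x y. R x y \<Longrightarrow> R y x" and "\<And>x. card {y. R x y} = d"
  shows "(\<Sum>x\<in>UNIV. adj_shift R \<rho> h x) = (real d - \<rho>) * (\<Sum>x\<in>UNIV. h x)"
  using sum_adj_op_regular[of R d h] assms
  by (simp add: adj_shift_def sum_subtractf sum_distrib_left left_diff_distrib)

section \<open>Connectivity\<close>

lemma two_le_card_components:
  fixes R :: "'a::finite \<Rightarrow> 'a \<Rightarrow> bool"
  assumes "\<not> R\<^sup>*\<^sup>* x y"
  shows "2 \<le> card (components R)"
proof -
  have "{{w. R\<^sup>*\<^sup>* x w}, {w. R\<^sup>*\<^sup>* y w}} \<subseteq> components R"
    by (auto simp: components_def)
  moreover have "{w. R\<^sup>*\<^sup>* x w} \<noteq> {w. R\<^sup>*\<^sup>* y w}"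
    using assms by auto
  then have "card {{w. R\<^sup>*\<^sup>* x w}, {w. R\<^sup>*\<^sup>* y w}} = 2"
    by simp
  ultimately show ?thesis
    by (metis card_mono finite)
qed

lemma rtranclp_if_common_pos:
  assumes "\<And>x y. R x y \<Longrightarrow> R y x" and "0 < common V R x z"
  shows "R\<^sup>*\<^sup>* x z"
proof -
  obtain y where "R x y" "R z y"
    using assms(2) by (auto simp: common_def card_gt_0_iff)
  then show ?thesis
    using assms(1) by (meson converse_rtranclp_into_rtranclp r_into_rtranclp)
qed

definition closed_nbrs :: "('a \<Rightarrow> 'a \<Rightarrow> bool) \<Rightarrow> 'a \<Rightarrow> 'a set" where
  "closed_nbrs R x = insert x {y. R x y}"

context
  fixes R :: "'a \<Rightarrow> 'a \<Rightarrow> bool"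
  assumes sym: "\<And>x y. R x y \<Longrightarrow> R y x"
    and trans: "\<And>x y z. R x y \<Longrightarrow> R y z \<Longrightarrow> x \<noteq> z \<Longrightarrow> R x z"
begin

lemma closed_nbrs_eq:
  assumes "w \<in> closed_nbrs R x"
  shows "closed_nbrs R w = closed_nbrs R x"
proof (cases "w = x")
  case False
  then have "R x w" "R w x"
    using assms sym by (auto simp: closed_nbrs_def)
  then show ?thesis
    unfolding closed_nbrs_def using trans[OF \<open>R x w\<close>] trans[OF \<open>R w x\<close>] by blast
qed simp

lemma reachable_eq_closed_nbrs: "{y. R\<^sup>*\<^sup>* x y} = closed_nbrs R x"
proof
  show "{y. R\<^sup>*\<^sup>* x y} \<subseteq> closed_nbrs R x"
  proof
    fix y assume "y \<in> {y. R\<^sup>*\<^sup>* x y}"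
    then have "R\<^sup>*\<^sup>* x y" by simp
    then show "y \<in> closed_nbrs R x"
    proof (induction rule: rtranclp_induct)
      case (step y z)
      then have "z \<in> closed_nbrs R y"
        by (simp add: closed_nbrs_def)
      then show ?case
        using closed_nbrs_eq[OF step.IH] by simp
    qed (simp add: closed_nbrs_def)
  qed
  show "closed_nbrs R x \<subseteq> {y. R\<^sup>*\<^sup>* x y}"
    by (auto simp: closed_nbrs_def)
qed

lemma complete_on_closed_nbrs: "complete_on (closed_nbrs R x) R"
  unfolding complete_on_def closed_nbrs_def by (metis insert_iff mem_Collect_eq sym trans)

end

lemma not_connected_if_sum_zero_eigenvector:
  fixes R :: "'a::finite \<Rightarrow> 'a \<Rightarrow> bool"
  assumes reg: "\<And>x. card {y. R x y} = d"
    and "g \<noteq> (\<lambda>_. 0)" and "(\<Sum>y\<in>UNIV. g y) = 0" and "adj_op R g = (\<lambda>x. real d * g x)"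
  shows "\<exists>x y. \<not> R\<^sup>*\<^sup>* x y"
proof -
  define M where "M = Max (range g)"
  have le_M: "g y \<le> M" for y
    unfolding M_def by (rule Max_ge) auto
  have "M \<in> range g"
    unfolding M_def by (rule Max_in) auto
  then obtain x0 where x0: "g x0 = M"
    by auto
  have max_spreads: "g y = M" if "g x = M" "R x y" for x y
  proof -
    have "(\<Sum>w\<in>{w. R x w}. M - g w) = real d * M - adj_op R g x"
      using reg[of x] by (simp add: sum_subtractf adj_op_eq_sum_nbrs)
    also have "\<dots> = 0"
      using assms(4) that(1) by simp
    finally have "\<forall>w\<in>{w. R x w}. M - g w = 0"
      using le_M by (subst sum_nonneg_eq_0_iff[symmetric]) auto
    then show ?thesis
      using that(2) by simp
  qed
  have "R\<^sup>*\<^sup>* x0 y \<Longrightarrow> g y = M" for y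
    by (induction rule: rtranclp_induct) (use x0 max_spreads in blast)+
  moreover obtain y0 where "g y0 \<noteq> M"
  proof (rule ccontr)
    assume "\<not> thesis"
    then have "g = (\<lambda>_. M)"
      using that by auto
    then show False
      using assms(2,3) by simp
  qed
  ultimately show ?thesis
    by blast
qed

text \<open>The product of the two shifts other than \<open>A - d\<close> kills every function of sum zero, so it is
  a multiple of \<open>J\<close>.\<close>
lemma walk_count_affine_if_no_sum_zero_eigenvector:
  fixes R :: "'a::finite \<Rightarrow> 'a \<Rightarrow> bool"
  assumes sym: "\<And>x y. R x y \<Longrightarrow> R y x" and reg: "\<And>x. card {y. R x y} = d"
    and ann: "\<And>f. adj_prod R [real d, \<theta>, \<theta>'] f = (\<lambda>_. 0)"
    and no_eigvec: "\<And>g. g \<noteq> (\<lambda>_. 0) \<Longrightarrow> (\<Sum>y\<in>UNIV. g y) = 0 \<Longrightarrow> adj_op R g \<noteq> (\<lambda>x. real d * g x)"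
  shows "\<exists>\<kappa>. \<forall>x z. x \<noteq> z \<longrightarrow>
    real (card {y. R x y \<and> R y z}) = \<kappa> + (\<theta> + \<theta>') * (if R x z then 1 else 0)"
proof -
  have sum_zero: "adj_prod R [\<theta>, \<theta>'] g = (\<lambda>_. 0)" if "(\<Sum>y\<in>UNIV. g y) = 0" for g
  proof (rule ccontr)
    define Y where "Y = adj_prod R [\<theta>, \<theta>'] g"
    assume "adj_prod R [\<theta>, \<theta>'] g \<noteq> (\<lambda>_. 0)"
    then have "Y \<noteq> (\<lambda>_. 0)"
      by (simp add: Y_def)
    moreover have "(\<Sum>y\<in>UNIV. Y y) = 0"
      using that sum_adj_shift_regular[of R d] sym reg by (simp add: Y_def)
    moreover have "adj_op R Y = (\<lambda>x. real d * Y x)"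
      using ann[of g] by (auto simp: Y_def adj_shift_def fun_eq_iff)
    ultimately show False
      using no_eigvec by blast
  qed
  define N where "N = real CARD('a)"
  define \<kappa> where "\<kappa> = (real d - \<theta>) * (real d - \<theta>') / N"
  have column: "adj_prod R [\<theta>, \<theta>'] (indicator {z}) x = \<kappa>" for z x
  proof -
    have "(\<Sum>y\<in>UNIV. indicator {z} y - 1 / N * 1) = 0"
      by (simp add: N_def sum_subtractf indicator_def)
    then have "adj_prod R [\<theta>, \<theta>'] (\<lambda>y. indicator {z} y - 1 / N * 1) x = 0"
      using sum_zero by metis
    moreover have "adj_prod R [\<theta>, \<theta>'] (\<lambda>_. 1) = (\<lambda>x. (\<Prod>\<rho>\<leftarrow>[\<theta>, \<theta>']. real d - \<rho>) * 1)"
      by (rule adj_prod_eigenvector) (simp add: fun_eq_iff adj_op_const reg)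
    ultimately show ?thesis
      unfolding adj_prod_diff_scale by (simp add: \<kappa>_def)
  qed
  show ?thesis
  proof (intro exI[of _ \<kappa>] allI impI)
    fix x z :: 'a assume "x \<noteq> z"
    then show "real (card {y. R x y \<and> R y z}) = \<kappa> + (\<theta> + \<theta>') * (if R x z then 1 else 0)"
      using adj_shift_adj_shift_indicator[of R \<theta> \<theta>' z x] column[of z x] by simp
  qed
qed

section \<open>Strongly Deza graphs: at most five eigenvalues\<close>

lemma real_quadratic_roots:
  fixes p q :: real
  assumes "0 \<le> p\<^sup>2 + 4 * q"
  obtains u v where "u + v = p" and "u * v = - q"
proof
  let ?s = "sqrt (p\<^sup>2 + 4 * q)"
  show "(p + ?s) / 2 + (p - ?s) / 2 = p"
    by (simp add: field_simps)
  have "(p + ?s) / 2 * ((p - ?s) / 2) = (p\<^sup>2 - ?s\<^sup>2) / 4"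
    by (simp add: field_simps power2_eq_square)
  then show "(p + ?s) / 2 * ((p - ?s) / 2) = - q"
    using assms by simp
qed

locale strongly_deza_graph =
  fixes E :: "'a::finite \<Rightarrow> 'a \<Rightarrow> bool" and n k b a nB kB lB mB :: nat
  assumes strongly_deza: "strongly_deza E n k b a"
    and srg_childB: "srg_on UNIV (childB UNIV E b a) nB kB lB mB"
begin

abbreviation B where "B \<equiv> childB UNIV E b a"

lemma deza: "deza_on UNIV E n k b a"
  using strongly_deza by (simp add: strongly_deza_def)

lemma E_sym: "E x y \<Longrightarrow> E y x" and E_irrefl: "\<not> E x x"
  using strongly_deza by (auto simp: strongly_deza_def simple_graph_def)

lemma E_regular: "card {y. E x y} = k"
  using deza by (auto simp: deza_on_def regular_on_def nbrs_def)

lemma a_less_b: "a < b"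
proof (rule ccontr)
  assume "\<not> a < b"
  then have "complete_on UNIV (childA UNIV E b a)"
    by (simp add: complete_on_def childA_def)
  then show False
    using strongly_deza by (auto simp: strongly_deza_def srg_on_def)
qed

lemma childB_iff: "B x y \<longleftrightarrow> x \<noteq> y \<and> common UNIV E x y = b"
  using a_less_b by (simp add: childB_def)

lemma common_eq_card_walks: "common UNIV E x y = card {z. E x z \<and> E z y}"
  unfolding common_def using E_sym by (metis (lifting) UNIV_I)

lemma common_cases: "x \<noteq> y \<Longrightarrow> common UNIV E x y = a \<or> common UNIV E x y = b"
  using deza by (auto simp: deza_on_def)

lemma E_walks: "card {y. E x y \<and> E y z} = (if x = z then k else if B x z then b else a)"
proof (cases "x = z")
  case True
  then have "{y. E x y \<and> E y z} = {y. E x y}"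
    using E_sym by blast
  then show ?thesis
    using True E_regular by simp
next
  case False
  then show ?thesis
    using common_cases[OF False] by (auto simp: childB_iff common_eq_card_walks)
qed

lemma childB_sym: "B x y \<Longrightarrow> B y x" and childB_irrefl: "\<not> B x x"
  using common_eq_card_walks E_sym by (auto simp: childB_iff) (metis (lifting))

lemma childB_regular: "card {y. B x y} = kB"
  using srg_childB by (auto simp: srg_on_def regular_on_def nbrs_def)

lemma childB_walks: "card {y. B x y \<and> B y z} = (if x = z then kB else if B x z then lB else mB)"
proof (cases "x = z")
  case True
  then have "{y. B x y \<and> B y z} = {y. B x y}"
    using childB_sym by blast
  then show ?thesis
    using True childB_regular by simp
next
  case False
  have "{y\<in>UNIV. B x y \<and> B z y} = {y. B x y \<and> B y z}"
    using childB_sym by blast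
  then have "common UNIV B x z = card {y. B x y \<and> B y z}"
    by (simp add: common_def)
  then show ?thesis
    using srg_childB False by (auto simp: srg_on_def)
qed

lemma ex_common_a: "\<exists>x y. x \<noteq> y \<and> common UNIV E x y = a"
  using strongly_deza a_less_b
  by (auto simp: strongly_deza_def srg_on_def edgeless_on_def childA_def)

lemma ex_childB: "\<exists>x y. B x y"
  using srg_childB by (auto simp: srg_on_def edgeless_on_def)

lemma k_pos: "0 < k"
proof -
  obtain x y where "E x y"
    using deza by (auto simp: deza_on_def edgeless_on_def)
  then show ?thesis
    using E_regular[of x] by (metis (mono_tags) card_gt_0_iff finite empty_iff mem_Collect_eq)
qed

lemma ex_nbr: "\<exists>u. E z u"
  using E_regular[of z] k_pos by (metis card.empty less_irrefl empty_Collect_eq)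

lemma mB_le_kB: "mB \<le> kB"
proof -
  obtain x y where "x \<noteq> y" "\<not> B x y"
    using srg_childB by (auto simp: srg_on_def complete_on_def)
  then have "mB = card {z. B x z \<and> B z y}"
    using childB_walks[of x y] by simp
  also have "\<dots> \<le> card {z. B x z}"
    by (intro card_mono) auto
  finally show ?thesis
    using childB_regular by simp
qed

lemma adj_op_adj_op_E:
  "adj_op E (adj_op E f) x
     = real a * (\<Sum>y\<in>UNIV. f y) + (real k - real a) * f x + (real b - real a) * adj_op B f x"
  by (rule adj_op_adj_op_three_classes[OF E_walks childB_irrefl])

lemma adj_op_adj_op_childB:
  "adj_op B (adj_op B f) x
     = real mB * (\<Sum>y\<in>UNIV. f y) + (real kB - real mB) * f x + (real lB - real mB) * adj_op B f x"
  by (rule adj_op_adj_op_three_classes[OF childB_walks childB_irrefl])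

text \<open>On functions of sum zero \<open>A\<^sup>2 - (k - a)\<close> acts as \<open>(b - a) B\<close>, and there
  \<open>B\<^sup>2 = (lB - mB) B + (kB - mB)\<close>.\<close>
lemma adj_sq_shift_sum_zero:
  assumes "(\<Sum>y\<in>UNIV. g y) = 0"
  shows "adj_sq_shift E (real k - real a + u) g = (\<lambda>x. (real b - real a) * adj_op B g x - u * g x)"
  unfolding adj_sq_shift_def by (rule ext) (simp add: adj_op_adj_op_E assms algebra_simps)

lemma adj_sq_shifts_sum_zero_eq_0:
  assumes sum_u: "u\<^sub>1 + u\<^sub>2 = (real lB - real mB) * (real b - real a)"
    and prod_u: "u\<^sub>1 * u\<^sub>2 = - ((real kB - real mB) * (real b - real a)\<^sup>2)"
    and g: "(\<Sum>y\<in>UNIV. g y) = 0"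
  shows "adj_sq_shift E (real k - real a + u\<^sub>1) (adj_sq_shift E (real k - real a + u\<^sub>2) g) = (\<lambda>_. 0)"
proof -
  define \<beta> where "\<beta> = real b - real a"
  define h where "h = (\<lambda>x. \<beta> * adj_op B g x - u\<^sub>2 * g x)"
  have sum_h: "(\<Sum>y\<in>UNIV. h y) = 0"
    using sum_adj_op_regular[of B kB g] childB_sym childB_regular g
    by (simp add: h_def sum_subtractf sum_distrib_left[symmetric])
  have B_h: "adj_op B h x
      = \<beta> * ((real kB - real mB) * g x + (real lB - real mB) * adj_op B g x) - u\<^sub>2 * adj_op B g x" for x
    using adj_op_adj_op_childB[of g x] g
    by (simp add: h_def adj_op_diff_scale adj_op_scale)
  have "\<beta> * adj_op B h x - u\<^sub>1 * h x = 0" for x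
  proof -
    have "\<beta> * adj_op B h x - u\<^sub>1 * h x = (\<beta> * \<beta> * (real kB - real mB) + u\<^sub>1 * u\<^sub>2) * g x
       + (\<beta> * \<beta> * (real lB - real mB) - \<beta> * (u\<^sub>1 + u\<^sub>2)) * adj_op B g x"
      unfolding B_h by (simp add: h_def algebra_simps)
    also have "\<dots> = 0"
      by (simp add: sum_u prod_u \<beta>_def power2_eq_square)
    finally show ?thesis .
  qed
  moreover have "adj_sq_shift E (real k - real a + u\<^sub>2) g = h"
    using adj_sq_shift_sum_zero[OF g] by (simp add: h_def \<beta>_def)
  ultimately show ?thesis
    using adj_sq_shift_sum_zero[OF sum_h, of u\<^sub>1] by (simp add: \<beta>_def)
qed

lemma quintic_annihilator:
  obtains \<rho>s where "length \<rho>s \<le> 5" and "\<And>f. adj_prod E \<rho>s f = (\<lambda>_. 0)"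
proof -
  have "0 \<le> ((real lB - real mB) * (real b - real a))\<^sup>2 + 4 * ((real kB - real mB) * (real b - real a)\<^sup>2)"
    using mB_le_kB by simp
  then obtain u\<^sub>1 u\<^sub>2 where u: "u\<^sub>1 + u\<^sub>2 = (real lB - real mB) * (real b - real a)"
      "u\<^sub>1 * u\<^sub>2 = - ((real kB - real mB) * (real b - real a)\<^sup>2)"
    by (rule real_quadratic_roots)
  define t\<^sub>1 where "t\<^sub>1 = real k - real a + u\<^sub>1"
  define t\<^sub>2 where "t\<^sub>2 = real k - real a + u\<^sub>2"
  have "adj_prod E (square_roots t\<^sub>2 @ square_roots t\<^sub>1 @ [real k]) f = (\<lambda>_. 0)" for f
  proof -
    have "(\<Sum>y\<in>UNIV. adj_shift E (real k) f y) = 0"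
      using sum_adj_shift_regular[of E k] E_sym E_regular by simp
    then have "adj_sq_shift E t\<^sub>1 (adj_sq_shift E t\<^sub>2 (adj_shift E (real k) f)) = (\<lambda>_. 0)"
      unfolding t\<^sub>1_def t\<^sub>2_def by (rule adj_sq_shifts_sum_zero_eq_0[OF u])
    then have "adj_sq_shift E t\<^sub>2 (adj_prod E (square_roots t\<^sub>1) (adj_shift E (real k) f)) = (\<lambda>_. 0)"
      using adj_prod_square_roots_eq_0[of E] E_sym by (simp add: adj_prod_adj_sq_shift[symmetric])
    then show ?thesis
      using adj_prod_square_roots_eq_0[of E] E_sym by (simp add: adj_prod_append)
  qed
  moreover have "length (square_roots t\<^sub>2 @ square_roots t\<^sub>1 @ [real k]) \<le> 5"
    by (simp add: square_roots_def)
  ultimately show ?thesis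
    using that by blast
qed

lemma card_eigenvalues_le_5: "card (adj_eigenvalues E) \<le> 5"
proof -
  obtain \<rho>s where "length \<rho>s \<le> 5" "\<And>f. adj_prod E \<rho>s f = (\<lambda>_. 0)"
    using quintic_annihilator by blast
  then show ?thesis
    using adj_eigenvalues_subset_roots card_mono card_length
    by (metis List.finite_set order_trans)
qed

lemma finite_eigenvalues: "finite (adj_eigenvalues E)"
  using quintic_annihilator adj_eigenvalues_subset_roots by (metis List.finite_set finite_subset)

lemma k_eigenvalue: "real k \<in> adj_eigenvalues E"
proof -
  have "adj_op E (\<lambda>_. 1) = (\<lambda>x. real k * 1)"
    by (simp add: fun_eq_iff adj_op_const E_regular)
  then show ?thesis
    unfolding adj_eigenvalues_def by (intro CollectI exI[of _ "\<lambda>_. 1"]) (simp add: fun_eq_iff)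
qed

lemma adj_prod_eigenvalues_eq_0:
  assumes "distinct \<theta>s" and "set \<theta>s = adj_eigenvalues E"
  shows "adj_prod E \<theta>s f = (\<lambda>_. 0)"
proof -
  obtain \<rho>s where "\<And>f. adj_prod E \<rho>s f = (\<lambda>_. 0)"
    using quintic_annihilator by blast
  then show ?thesis
    using adj_prod_distinct_eigenvalues_eq_0[of E \<rho>s \<theta>s f] E_sym assms by blast
qed

section \<open>Two eigenvalues\<close>

lemma common_if_two_eigenvalues:
  assumes "card (adj_eigenvalues E) = 2" and "x \<noteq> z"
  shows "common UNIV E x z = (if E x z then k - 1 else 0)"
proof -
  obtain \<theta> where eig: "adj_eigenvalues E = {real k, \<theta>}" and "\<theta> \<noteq> real k"
    using assms(1) k_eigenvalue finite_eigenvalues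
    by (metis card_2_iff doubleton_eq_iff insertE singletonD)
  then have "adj_prod E [real k, \<theta>] (indicator {w}) = (\<lambda>_. 0)" for w
    by (intro adj_prod_eigenvalues_eq_0) auto
  then have walks: "real (card {y. E v y \<and> E y w}) - (real k + \<theta>) * (if E v w then 1 else 0)
      + real k * \<theta> * (if v = w then 1 else 0) = 0" for v w
    using adj_shift_adj_shift_indicator[of E "real k" \<theta> w v] by (simp add: fun_eq_iff)
  have "real k * (1 + \<theta>) = 0"
    using walks[of x x] E_walks[of x x] E_irrefl[of x] by (simp add: algebra_simps)
  then have "\<theta> = -1"
    using k_pos by simp
  then have "real (common UNIV E x z) = (if E x z then real k - 1 else 0)"
    using walks[of x z] assms(2) by (cases "E x z") (simp_all add: common_eq_card_walks algebra_simps)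
  then show ?thesis
    using k_pos by (cases "E x z") (simp_all add: of_nat_diff)
qed

lemma two_eigenvalues:
  assumes two: "card (adj_eigenvalues E) = 2"
  shows "a = 0 \<and> b = k - 1 \<and> 1 \<le> k - 1 \<and> 2 \<le> card (components E) \<and>
    (\<forall>C\<in>components E. card C = k + 1 \<and> complete_on C E)"
proof -
  have trans: "E x z" if "E x y" "E y z" "x \<noteq> z" for x y z
  proof (rule ccontr)
    assume "\<not> E x z"
    then have "common UNIV E x z = 0"
      using common_if_two_eigenvalues[OF two \<open>x \<noteq> z\<close>] by simp
    then show False
      using that E_sym by (auto simp: common_def)
  qed
  have components: "{y. E\<^sup>*\<^sup>* x y} = closed_nbrs E x" for x
    using reachable_eq_closed_nbrs[of E] E_sym trans by blast
  obtain x y where "x \<noteq> y" "common UNIV E x y = a"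
    using ex_common_a by blast
  moreover obtain x' y' where "B x' y'"
    using ex_childB by blast
  ultimately have "a = 0" "b = k - 1" "1 \<le> k - 1"
    using common_if_two_eigenvalues[OF two] a_less_b by (auto simp: childB_iff split: if_splits)
  moreover obtain x y where "x \<noteq> y" "\<not> E x y"
    using deza by (auto simp: deza_on_def complete_on_def)
  then have "2 \<le> card (components E)"
    using components[of x] by (intro two_le_card_components[of E x y]) (auto simp: closed_nbrs_def)
  moreover have "card (closed_nbrs E x) = k + 1" for x
    using E_regular[of x] E_irrefl[of x] by (simp add: closed_nbrs_def)
  moreover have "complete_on (closed_nbrs E x) E" for x
    using complete_on_closed_nbrs[of E] E_sym trans by blast
  ultimately show ?thesis
    by (auto simp: components_def components)
qed

section \<open>Three eigenvalues\<close>

lemma srg_if_common_affine: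
  assumes aff: "\<And>x z. x \<noteq> z \<Longrightarrow> real (common UNIV E x z) = \<kappa> + \<delta> * (if E x z then 1 else 0)"
  shows "\<exists>l m. srg_on UNIV E n k l m \<and> {l, m} = {a, b}"
proof -
  obtain x\<^sub>1 y\<^sub>1 where e1: "E x\<^sub>1 y\<^sub>1"
    using deza by (auto simp: deza_on_def edgeless_on_def)
  then have n1: "x\<^sub>1 \<noteq> y\<^sub>1"
    using E_irrefl by auto
  obtain x\<^sub>2 y\<^sub>2 where e2: "x\<^sub>2 \<noteq> y\<^sub>2" "\<not> E x\<^sub>2 y\<^sub>2"
    using deza by (auto simp: deza_on_def complete_on_def)
  define l where "l = common UNIV E x\<^sub>1 y\<^sub>1"
  define m where "m = common UNIV E x\<^sub>2 y\<^sub>2"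
  have l: "common UNIV E x y = l" if "x \<noteq> y" "E x y" for x y
    using aff[OF that(1)] aff[OF n1] that e1 by (simp add: l_def)
  have m: "common UNIV E x y = m" if "x \<noteq> y" "\<not> E x y" for x y
    using aff[OF that(1)] aff[OF e2(1)] that e2 by (simp add: m_def)
  have "srg_on UNIV E n k l m"
    using deza l m by (auto simp: srg_on_def deza_on_def)
  moreover have "l \<noteq> m"
  proof
    assume "l = m"
    then have all: "x \<noteq> y \<Longrightarrow> common UNIV E x y = l" for x y
      using l m by (cases "E x y") auto
    obtain x y where "x \<noteq> y" "common UNIV E x y = a"
      using ex_common_a by blast
    moreover obtain x' y' where "B x' y'"
      using ex_childB by blast
    ultimately show False
      using all a_less_b by (auto simp: childB_iff)
  qed
  moreover have "l = a \<or> l = b" "m = a \<or> m = b"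
    using common_cases n1 e2(1) by (auto simp: l_def m_def)
  ultimately show ?thesis
    by blast
qed

lemma three_eigenvalues_connected:
  assumes "card (adj_eigenvalues E) = 3"
    and "\<And>g. g \<noteq> (\<lambda>_. 0) \<Longrightarrow> (\<Sum>y\<in>UNIV. g y) = 0 \<Longrightarrow> adj_op E g \<noteq> (\<lambda>x. real k * g x)"
  shows "\<exists>l m. srg_on UNIV E n k l m \<and> {l, m} = {a, b}"
proof -
  have "card (adj_eigenvalues E - {real k}) = 2"
    using assms(1) k_eigenvalue finite_eigenvalues by simp
  then obtain \<theta> \<theta>' where "adj_eigenvalues E - {real k} = {\<theta>, \<theta>'}" "\<theta> \<noteq> \<theta>'"
    by (meson card_2_iff)
  then have "adj_prod E [real k, \<theta>, \<theta>'] f = (\<lambda>_. 0)" for f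
    using k_eigenvalue by (intro adj_prod_eigenvalues_eq_0) auto
  then obtain \<kappa> where "\<forall>x z. x \<noteq> z \<longrightarrow>
      real (card {y. E x y \<and> E y z}) = \<kappa> + (\<theta> + \<theta>') * (if E x z then 1 else 0)"
    using walk_count_affine_if_no_sum_zero_eigenvector[of E k \<theta> \<theta>'] E_sym E_regular assms(2)
    by blast
  then show ?thesis
    by (intro srg_if_common_affine[of \<kappa> "\<theta> + \<theta>'"]) (simp add: common_eq_card_walks)
qed

lemma reachable_if_childB: "B x y \<Longrightarrow> E\<^sup>*\<^sup>* x y"
  using a_less_b E_sym by (intro rtranclp_if_common_pos[of E UNIV]) (auto simp: childB_iff)

lemma a_eq_0_and_mB_eq_0_if_disconnected:
  assumes "\<not> E\<^sup>*\<^sup>* x y"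
  shows "a = 0" and "mB = 0"
proof -
  have "x \<noteq> y"
    using assms by auto
  have "common UNIV E x y = 0"
    using rtranclp_if_common_pos[of E] E_sym assms by blast
  then show "a = 0"
    using common_cases[OF \<open>x \<noteq> y\<close>] a_less_b by auto
  have "\<not> B x y"
    using \<open>common UNIV E x y = 0\<close> a_less_b by (simp add: childB_iff)
  then have "mB = card {w. B x w \<and> B w y}"
    using childB_walks[of x y] \<open>x \<noteq> y\<close> by simp
  moreover have "\<not> (B x w \<and> B w y)" for w
    using reachable_if_childB[of x w] reachable_if_childB[of w y] rtranclp_trans[of E x w y] assms
    by blast
  then have "{w. B x w \<and> B w y} = {}"
    by blast
  ultimately show "mB = 0"
    by (metis card.empty)
qed

end

text \<open>The situation of a disconnected strongly Deza graph: \<open>mB = 0\<close> makes \<open>G\<^sub>B\<close> a disjoint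
  union of cliques.\<close>
locale strongly_deza_graph_clique_child = strongly_deza_graph +
  assumes a_eq_0: "a = 0" and mB_eq_0: "mB = 0"
begin

abbreviation clique where "clique x \<equiv> closed_nbrs B x"

lemma b_pos: "0 < b"
  using a_less_b a_eq_0 by simp

lemma kB_pos: "0 < kB"
  using ex_childB childB_regular by (metis card_gt_0_iff finite empty_iff mem_Collect_eq)

lemma childB_trans: "B x y \<Longrightarrow> B y z \<Longrightarrow> x \<noteq> z \<Longrightarrow> B x z"
  using childB_walks[of x z] mB_eq_0 by (auto simp: card_eq_0_iff split: if_splits)

lemma clique_eq: "w \<in> clique x \<Longrightarrow> clique w = clique x"
  using closed_nbrs_eq[of B] childB_sym childB_trans by blast

lemma card_clique: "card (clique x) = kB + 1"
  using childB_regular[of x] childB_irrefl[of x] by (simp add: closed_nbrs_def)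

lemma reachable_if_in_clique: "y \<in> clique x \<Longrightarrow> E\<^sup>*\<^sup>* x y"
  using reachable_if_childB by (auto simp: closed_nbrs_def)

lemma sum_clique: "(\<Sum>y\<in>clique x. f y) = f x + adj_op B f x"
  using childB_irrefl[of x] by (simp add: closed_nbrs_def adj_op_eq_sum_nbrs)

lemma adj_op_adj_op_E_clique_child: "adj_op E (adj_op E f) x = real k * f x + real b * adj_op B f x"
  using adj_op_adj_op_E[of f x] a_eq_0 by simp

lemma k_squared: "real k ^ 2 = real k + real b * real kB"
proof -
  have "adj_op E (\<lambda>_. 1) = (\<lambda>x. real k)"
    by (simp add: fun_eq_iff adj_op_const E_regular)
  then show ?thesis
    using adj_op_adj_op_E_clique_child[of "\<lambda>_. 1"]
    by (simp add: adj_op_const E_regular childB_regular power2_eq_square)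
qed

lemma no_common_nbr_if_not_childB:
  assumes "x \<noteq> y" "\<not> B x y" "E x v" "E v y"
  shows False
proof -
  have "common UNIV E x y \<noteq> b"
    using assms(1,2) childB_iff by blast
  then have "common UNIV E x y = 0"
    using common_cases[OF assms(1)] a_eq_0 by simp
  then show False
    using assms(3,4) E_sym by (auto simp: common_def)
qed

text \<open>Summing an eigenfunction over a clique gives \<open>(1 + r) f x\<close>.\<close>
lemma childB_eigenfunction_const_on_clique:
  assumes eig: "adj_op B f = (\<lambda>x. r * f x)" and "r \<noteq> -1" and "w \<in> clique x"
  shows "f w = f x"
proof -
  have sum: "(\<Sum>y\<in>clique v. f y) = (1 + r) * f v" for v
    using sum_clique[of f v] eig by (simp add: algebra_simps)
  have "(1 + r) * f w = (1 + r) * f x"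
    using sum[of w] sum[of x] clique_eq[OF assms(3)] by metis
  then show ?thesis
    using \<open>r \<noteq> -1\<close> by simp
qed

lemma childB_eigenvalue_cases:
  assumes eig: "adj_op B f = (\<lambda>x. r * f x)" and "f x \<noteq> 0"
  shows "r = real kB \<or> r = -1"
proof (rule disjCI)
  assume "r \<noteq> -1"
  have "adj_op B f x = (\<Sum>y\<in>{y. B x y}. f x)"
    unfolding adj_op_eq_sum_nbrs using childB_eigenfunction_const_on_clique[OF eig \<open>r \<noteq> -1\<close>]
    by (intro sum.cong) (auto simp: closed_nbrs_def)
  then have "adj_op B f x = real kB * f x"
    using childB_regular[of x] by simp
  then show "r = real kB"
    using eig \<open>f x \<noteq> 0\<close> by simp
qed

lemma eigenvalue_squared_cases:
  assumes "c \<in> adj_eigenvalues E"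
  shows "c\<^sup>2 = real k ^ 2 \<or> c\<^sup>2 = real k - real b"
proof -
  obtain f where f: "f \<noteq> (\<lambda>_. 0)" "adj_op E f = (\<lambda>x. c * f x)"
    using assms by (auto simp: adj_eigenvalues_def)
  then obtain x where "f x \<noteq> 0"
    by auto
  have "adj_op B f = (\<lambda>y. ((c\<^sup>2 - real k) / real b) * f y)"
  proof
    fix y
    have "c\<^sup>2 * f y = real k * f y + real b * adj_op B f y"
      using adj_op_adj_op_E_clique_child[of f y] f(2) by (simp add: adj_op_scale power2_eq_square)
    then show "adj_op B f y = ((c\<^sup>2 - real k) / real b) * f y"
      using b_pos by (simp add: field_simps)
  qed
  from childB_eigenvalue_cases[OF this \<open>f x \<noteq> 0\<close>] show ?thesis
    using b_pos k_squared by (auto simp: field_simps)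
qed

lemma card_eigenvalues_le_2_if_E_eq_childB:
  assumes "\<And>x y. E x y \<longleftrightarrow> B x y"
  shows "card (adj_eigenvalues E) \<le> 2"
proof -
  have "adj_op E = adj_op B"
    by (simp add: fun_eq_iff adj_op_def assms)
  have "adj_eigenvalues E \<subseteq> {real kB, -1}"
  proof
    fix c assume "c \<in> adj_eigenvalues E"
    then obtain f where "f \<noteq> (\<lambda>_. 0)" "adj_op B f = (\<lambda>x. c * f x)"
      using \<open>adj_op E = adj_op B\<close> by (auto simp: adj_eigenvalues_def)
    moreover obtain x where "f x \<noteq> 0"
      using \<open>f \<noteq> (\<lambda>_. 0)\<close> by auto
    ultimately show "c \<in> {real kB, -1}"
      using childB_eigenvalue_cases by blast
  qed
  moreover have "card {real kB, -1} \<le> 2"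
    by (simp add: card_insert_le_m1)
  ultimately show ?thesis
    by (meson card_mono finite.emptyI finite.insertI le_trans)
qed

text \<open>Here \<open>A\<^sup>2 - (k - b) = b (I + B)\<close> is \<open>b\<close> times the block matrix of the cliques, so
  \<open>(A - k)(A\<^sup>2 - s\<^sup>2) = 0\<close> makes every clique indicator a \<open>k\<close>-eigenvector of \<open>A\<close>.\<close>
lemma nbrs_subset_clique:
  assumes eig: "adj_eigenvalues E = {real k, s, - s}" and "distinct [real k, s, - s]"
    and s: "s\<^sup>2 = real k - real b"
  shows "{w. E y w} \<subseteq> clique y"
proof -
  have clique_indicator: "adj_sq_shift E (s\<^sup>2) (indicator {y}) = (\<lambda>x. real b * indicator (clique y) x)"
  proof
    fix x
    have "x \<in> clique y \<longleftrightarrow> x = y \<or> B x y"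
      using childB_sym by (auto simp: closed_nbrs_def)
    then show "adj_sq_shift E (s\<^sup>2) (indicator {y}) x = real b * indicator (clique y) x"
      using E_walks[of x y] by (simp add: adj_sq_shift_def adj_op_adj_op_indicator s a_eq_0 indicator_def)
  qed
  have "adj_shift E (real k) (adj_sq_shift E (s\<^sup>2) (indicator {y})) = (\<lambda>_. 0)"
    using adj_prod_eigenvalues_eq_0[OF assms(2), of "indicator {y}"] eig
    by (simp add: adj_shift_adj_shift_neg)
  then have "adj_op E (indicator (clique y)) = (\<lambda>x. real k * indicator (clique y) x)"
    unfolding clique_indicator using b_pos by (simp add: adj_shift_def adj_op_scale fun_eq_iff)
  then have "adj_op E (indicator (clique y)) y = real k"
    by (metis closed_nbrs_def indicator_simps(1) insertI1 mult.right_neutral)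
  then have "card {w. E y w \<and> w \<in> clique y} = card {w. E y w}"
    using E_regular[of y] by (simp add: adj_op_indicator_set)
  then show ?thesis
    using card_subset_eq[of "{w. E y w}" "{w. E y w \<and> w \<in> clique y}"] by auto
qed

context
  assumes nbrs_subset: "\<And>y. {w. E y w} \<subseteq> clique y"
begin

lemma reachable_eq_clique: "{w. E\<^sup>*\<^sup>* x w} = clique x"
proof
  show "{w. E\<^sup>*\<^sup>* x w} \<subseteq> clique x"
  proof
    fix w assume "w \<in> {w. E\<^sup>*\<^sup>* x w}"
    then have "E\<^sup>*\<^sup>* x w" by simp
    then show "w \<in> clique x"
    proof (induction rule: rtranclp_induct)
      case (step y z)
      then have "z \<in> clique y"
        using nbrs_subset[of y] by (auto simp: closed_nbrs_def)
      then show ?case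
        using clique_eq[OF step.IH] by simp
    qed (simp add: closed_nbrs_def)
  qed
  show "clique x \<subseteq> {w. E\<^sup>*\<^sup>* x w}"
    using reachable_if_in_clique by blast
qed

lemma E_eq_childB_if_complete_on_clique:
  assumes "complete_on (clique x) E"
  shows "E y w \<longleftrightarrow> B y w"
proof -
  have "{w. E x w} = {w. B x w}"
    using nbrs_subset[of x] E_irrefl[of x] assms childB_irrefl
    by (auto simp: complete_on_def closed_nbrs_def)
  then have "k = kB"
    using E_regular[of x] childB_regular[of x] by simp
  have "{w. E y w} = {w. B y w}"
    using nbrs_subset[of y] E_irrefl[of y] E_regular[of y] childB_regular[of y] \<open>k = kB\<close>
    by (intro card_subset_eq) (auto simp: closed_nbrs_def)
  then show ?thesis
    by blast
qed

lemma srg_on_clique: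
  assumes "\<not> (\<forall>x y. E x y \<longleftrightarrow> B x y)"
  shows "srg_on (clique x) E (card (clique x)) k b b"
proof -
  have nbrs: "{w. E y w} \<subseteq> clique x" if "y \<in> clique x" for y
    using nbrs_subset[of y] clique_eq[OF that] by simp
  have common: "common (clique x) E y w = common UNIV E y w" if "y \<in> clique x" for y w
  proof -
    have "{z \<in> clique x. E y z \<and> E w z} = {z \<in> UNIV. E y z \<and> E w z}"
      using nbrs[OF that] by blast
    then show ?thesis
      by (simp add: common_def)
  qed
  have "regular_on (clique x) E k"
    unfolding regular_on_def nbrs_def
  proof
    fix y assume "y \<in> clique x"
    then have "{w \<in> clique x. E y w} = {w. E y w}"
      using nbrs by blast
    then show "card {w \<in> clique x. E y w} = k"
      using E_regular by simp
  qed
  moreover have "common (clique x) E y w = b" if "y \<in> clique x" "w \<in> clique x" "y \<noteq> w" for y w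
  proof -
    have "w \<in> clique y"
      using that(2) clique_eq[OF that(1)] by simp
    then have "B y w"
      using that(3) by (simp add: closed_nbrs_def)
    then show ?thesis
      using common[OF that(1)] by (simp add: childB_iff)
  qed
  moreover have "\<not> edgeless_on (clique x) E"
    using ex_nbr[of x] nbrs[of x] by (auto simp: edgeless_on_def closed_nbrs_def)
  moreover have "\<not> complete_on (clique x) E"
    using E_eq_childB_if_complete_on_clique assms by blast
  ultimately show ?thesis
    using common by (auto simp: srg_on_def)
qed

end

lemma three_eigenvalues_srg_components:
  assumes three: "card (adj_eigenvalues E) = 3" and eig: "adj_eigenvalues E = {real k, s, - s}"
    and s: "s\<^sup>2 = real k - real b"
  shows "\<forall>C\<in>components E. \<exists>v. srg_on C E v k b b"
proof -
  have "distinct [real k, s, - s]"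
    using three eig by (auto simp: card_insert_if split: if_splits)
  then have nbrs: "\<And>y. {w. E y w} \<subseteq> clique y"
    using nbrs_subset_clique eig s by blast
  have E_ne_childB: "\<not> (\<forall>x y. E x y \<longleftrightarrow> B x y)"
    using card_eigenvalues_le_2_if_E_eq_childB three by fastforce
  show ?thesis
  proof
    fix C assume "C \<in> components E"
    then obtain x where "C = {w. E\<^sup>*\<^sup>* x w}"
      by (auto simp: components_def)
    then show "\<exists>v. srg_on C E v k b b"
      using reachable_eq_clique[OF nbrs] srg_on_clique[OF nbrs E_ne_childB] by auto
  qed
qed

context
  fixes c :: real
  assumes eig: "adj_eigenvalues E = {real k, - real k, c}" and dist: "distinct [real k, - real k, c]"
begin

text \<open>Here \<open>(A\<^sup>2 - k\<^sup>2)(A - c) = 0\<close> and \<open>A\<^sup>2 - k\<^sup>2 = b (B - kB)\<close>, so every column of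
  \<open>A - c\<close> is a \<open>kB\<close>-eigenvector of \<open>B\<close>.\<close>
lemma column_const_on_clique:
  assumes "w \<in> clique x"
  shows "adj_shift E c (indicator {z}) w = adj_shift E c (indicator {z}) x"
proof -
  define Y where "Y = adj_shift E c (indicator {z})"
  have "adj_sq_shift E ((real k)\<^sup>2) Y = (\<lambda>_. 0)"
    using adj_prod_eigenvalues_eq_0[OF dist, of "indicator {z}"] eig
    by (simp add: Y_def adj_shift_adj_shift_neg)
  then have "adj_op E (adj_op E Y) y = (real k)\<^sup>2 * Y y" for y
    by (simp add: adj_sq_shift_def fun_eq_iff)
  then have "real b * (real kB * Y y) = real b * adj_op B Y y" for y
    using adj_op_adj_op_E_clique_child[of Y y] k_squared by (simp add: algebra_simps)
  then have "adj_op B Y = (\<lambda>y. real kB * Y y)"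
    using b_pos by (simp add: fun_eq_iff)
  then show ?thesis
    using childB_eigenfunction_const_on_clique assms by (simp add: Y_def)
qed

lemma E_iff_if_in_clique:
  assumes "x' \<in> clique x" and "z \<notin> clique x"
  shows "E x z \<longleftrightarrow> E x' z"
proof -
  have "x \<noteq> z" "x' \<noteq> z"
    using assms by (auto simp: closed_nbrs_def)
  then show ?thesis
    using column_const_on_clique[OF assms(1), of z]
    by (simp add: adj_shift_def adj_op_indicator indicator_def split: if_splits)
qed

lemma E_indicator_eq_neg_if_childB:
  assumes "B z w"
  shows "(if E w z then 1 else 0) = - c"
proof -
  have "w \<noteq> z" "w \<in> clique z"
    using assms childB_irrefl by (auto simp: closed_nbrs_def)
  then show ?thesis
    using column_const_on_clique[of w z z] E_irrefl[of z]
    by (simp add: adj_shift_def adj_op_indicator indicator_def)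
qed

lemma third_eigenvalue_eq_0: "c = 0"
proof (rule ccontr)
  assume "c \<noteq> 0"
  moreover obtain z w where "B z w"
    using ex_childB by blast
  ultimately have "c = -1"
    using E_indicator_eq_neg_if_childB[of z w] by (auto split: if_splits)
  then have childB_E: "B y w \<Longrightarrow> E y w" for y w
    using E_indicator_eq_neg_if_childB[of y w] E_sym by (auto split: if_splits)
  have "B y z" if "E y z" for y z
  proof (rule ccontr)
    assume "\<not> B y z"
    have "y \<noteq> z"
      using that E_irrefl by auto
    obtain w where "B y w"
      using childB_regular[of y] kB_pos by (metis card.empty less_irrefl empty_Collect_eq)
    then have "E w z"
      using E_iff_if_in_clique[of w y z] that \<open>y \<noteq> z\<close> \<open>\<not> B y z\<close> by (auto simp: closed_nbrs_def)
    then show False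
      using no_common_nbr_if_not_childB[OF \<open>y \<noteq> z\<close> \<open>\<not> B y z\<close> childB_E[OF \<open>B y w\<close>]] by blast
  qed
  then have "card (adj_eigenvalues E) \<le> 2"
    using childB_E by (intro card_eigenvalues_le_2_if_E_eq_childB) blast
  then show False
    using eig dist by simp
qed

lemma not_E_if_in_clique: "w \<in> clique z \<Longrightarrow> \<not> E z w"
  using E_indicator_eq_neg_if_childB[of z w] third_eigenvalue_eq_0 E_sym E_irrefl
  by (auto simp: closed_nbrs_def split: if_splits)

lemma not_in_clique_if_E: "E z u \<Longrightarrow> z \<notin> clique u"
  using not_E_if_in_clique clique_eq E_sym by (metis closed_nbrs_def insertI1)

lemma nbrs_eq_clique:
  assumes "E z u"
  shows "{w. E z w} = clique u"
proof
  show "clique u \<subseteq> {w. E z w}"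
    using E_iff_if_in_clique[OF _ not_in_clique_if_E[OF assms]] assms E_sym by blast
  show "{w. E z w} \<subseteq> clique u"
  proof
    fix v assume "v \<in> {w. E z w}"
    then show "v \<in> clique u"
      using no_common_nbr_if_not_childB[of u v z] assms E_sym by (auto simp: closed_nbrs_def)
  qed
qed

lemma nbrs_eq_if_in_clique:
  assumes "x \<in> clique z"
  shows "{w. E x w} = {w. E z w}"
proof (intro set_eqI)
  fix w
  show "w \<in> {w. E x w} \<longleftrightarrow> w \<in> {w. E z w}"
  proof (cases "w \<in> clique z")
    case True
    then have "w \<in> clique x"
      using clique_eq[OF assms] by simp
    then show ?thesis
      using not_E_if_in_clique True by blast
  next
    case False
    then show ?thesis
      using E_iff_if_in_clique[OF assms False] by simp
  qed
qed

lemma k_eq_kB_plus_1: "k = kB + 1"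
proof -
  obtain z u where "E z u"
    using ex_nbr by blast
  then show ?thesis
    using nbrs_eq_clique E_regular[of z] card_clique[of u] by simp
qed

lemma reachable_eq_clique_union:
  assumes "E z u"
  shows "{w. E\<^sup>*\<^sup>* z w} = clique z \<union> clique u"
proof
  have nbrs: "{w. E x w} = clique u" if "x \<in> clique z" for x
    using nbrs_eq_if_in_clique[OF that] nbrs_eq_clique[OF assms] by simp
  have nbrs': "{w. E y w} = clique z" if "y \<in> clique u" for y
    using nbrs_eq_if_in_clique[OF that] nbrs_eq_clique[of u z] assms E_sym by simp
  show "{w. E\<^sup>*\<^sup>* z w} \<subseteq> clique z \<union> clique u"
  proof
    fix w assume "w \<in> {w. E\<^sup>*\<^sup>* z w}"
    then have "E\<^sup>*\<^sup>* z w" by simp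
    then show "w \<in> clique z \<union> clique u"
    proof (induction rule: rtranclp_induct)
      case (step y v)
      then show ?case
        using nbrs nbrs' by blast
    qed (simp add: closed_nbrs_def)
  qed
  show "clique z \<union> clique u \<subseteq> {w. E\<^sup>*\<^sup>* z w}"
    using reachable_if_in_clique assms by (blast intro: converse_rtranclp_into_rtranclp)
qed

lemma cliques_disjoint_if_E:
  assumes "E z u"
  shows "clique z \<inter> clique u = {}"
proof (rule ccontr)
  assume "clique z \<inter> clique u \<noteq> {}"
  then obtain w where "w \<in> clique z" "w \<in> clique u"
    by blast
  then have "clique z = clique u"
    using clique_eq[of w z] clique_eq[of w u] by simp
  moreover have "z \<in> clique z"
    by (simp add: closed_nbrs_def)
  ultimately show False
    using not_in_clique_if_E[OF assms] by simp
qed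

lemma E_iff_in_clique_of_nbr:
  assumes "E z u" and "x \<in> clique z"
  shows "E x y \<longleftrightarrow> y \<in> clique u"
proof -
  have "{w. E x w} = clique u"
    using nbrs_eq_if_in_clique[OF assms(2)] nbrs_eq_clique[OF assms(1)] by simp
  then show ?thesis
    by (simp add: set_eq_iff)
qed

lemma complete_bipartite_component:
  assumes "C \<in> components E"
  shows "complete_bipartite_on C E k"
proof -
  obtain z where "C = {w. E\<^sup>*\<^sup>* z w}"
    using assms by (auto simp: components_def)
  moreover obtain u where "E z u"
    using ex_nbr by blast
  ultimately have C: "C = clique z \<union> clique u"
    using reachable_eq_clique_union by simp
  have disjoint: "clique z \<inter> clique u = {}"
    using cliques_disjoint_if_E[OF \<open>E z u\<close>] .
  have "E x y \<longleftrightarrow> x \<in> clique z \<and> y \<in> clique u \<or> x \<in> clique u \<and> y \<in> clique z"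
    if "x \<in> C" for x y
  proof (cases "x \<in> clique z")
    case True
    then show ?thesis
      using E_iff_in_clique_of_nbr[OF \<open>E z u\<close> True] disjoint by blast
  next
    case False
    then have "x \<in> clique u"
      using that C by simp
    then show ?thesis
      using E_iff_in_clique_of_nbr[OF E_sym[OF \<open>E z u\<close>]] False by simp
  qed
  then show ?thesis
    unfolding complete_bipartite_on_def C using disjoint card_clique k_eq_kB_plus_1
    by (intro exI[of _ "clique z"] exI[of _ "clique u"]) simp
qed

end

lemma ex_eigenvalue_ne_k_ne_neg_k:
  assumes "2 < card (adj_eigenvalues E)"
  obtains c where "c \<in> adj_eigenvalues E" "c \<noteq> real k" "c \<noteq> - real k"
proof (rule ccontr)
  assume "\<not> thesis"
  then have "adj_eigenvalues E \<subseteq> {real k, - real k}"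
    using that by blast
  moreover have "card {real k, - real k} \<le> 2"
    by (simp add: card_insert_le_m1)
  ultimately show False
    using assms card_mono[of "{real k, - real k}" "adj_eigenvalues E"] by simp
qed

lemma eigenvalues_subset_if_neg_k_not_eigenvalue:
  assumes "- real k \<notin> adj_eigenvalues E" and c: "c\<^sup>2 = real k - real b"
  shows "adj_eigenvalues E \<subseteq> {real k, c, - c}"
proof
  fix d assume d: "d \<in> adj_eigenvalues E"
  show "d \<in> {real k, c, - c}"
  proof (cases "d = real k")
    case False
    moreover have "d \<noteq> - real k"
      using d assms(1) by auto
    ultimately have "d\<^sup>2 \<noteq> (real k)\<^sup>2"
      by (simp add: power2_eq_iff)
    then have "d\<^sup>2 = c\<^sup>2"
      using eigenvalue_squared_cases[OF d] c by simp
    then show ?thesis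
      by (simp add: power2_eq_iff)
  qed simp
qed

lemma three_eigenvalues_clique_child:
  assumes three: "card (adj_eigenvalues E) = 3"
  shows "(\<forall>C\<in>components E. \<exists>v. srg_on C E v k b b) \<or>
    (2 \<le> k \<and> (\<forall>C\<in>components E. complete_bipartite_on C E k))"
proof -
  obtain c where c: "c \<in> adj_eigenvalues E" "c \<noteq> real k" "c \<noteq> - real k"
    using ex_eigenvalue_ne_k_ne_neg_k three by auto
  have c_sq: "c\<^sup>2 = real k - real b"
    using eigenvalue_squared_cases[OF c(1)] c(2,3) by (auto simp: power2_eq_iff)
  show ?thesis
  proof (cases "- real k \<in> adj_eigenvalues E")
    case True
    have sub: "{real k, - real k, c} \<subseteq> adj_eigenvalues E" and dist: "distinct [real k, - real k, c]"
      using True k_eigenvalue c k_pos by auto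
    then have "card {real k, - real k, c} = card (adj_eigenvalues E)"
      using three by simp
    then have eig: "adj_eigenvalues E = {real k, - real k, c}"
      using card_subset_eq[OF finite_eigenvalues sub] by simp
    then show ?thesis
      using complete_bipartite_component[OF eig dist] k_eq_kB_plus_1[OF eig dist] kB_pos by simp
  next
    case False
    have "card {real k, c, - c} \<le> card (adj_eigenvalues E)"
      using card_length[of "[real k, c, - c]"] three by (simp only: list.set) simp
    then have "adj_eigenvalues E = {real k, c, - c}"
      using eigenvalues_subset_if_neg_k_not_eigenvalue[OF False c_sq] by (intro card_seteq) simp_all
    then show ?thesis
      using three_eigenvalues_srg_components[OF three _ c_sq] by blast
  qed
qed

end

context strongly_deza_graph
begin

lemma three_eigenvalues:
  assumes three: "card (adj_eigenvalues E) = 3"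
  shows "(\<exists>l m. srg_on UNIV E n k l m \<and> {l, m} = {a, b}) \<or>
    (2 \<le> card (components E) \<and> (\<forall>C\<in>components E. \<exists>v. srg_on C E v k b b)) \<or>
    (2 \<le> k \<and> (\<forall>C\<in>components E. complete_bipartite_on C E k))"
proof (cases "\<exists>g. g \<noteq> (\<lambda>_. 0) \<and> (\<Sum>y\<in>UNIV. g y) = 0 \<and> adj_op E g = (\<lambda>x. real k * g x)")
  case False
  then show ?thesis
    using three_eigenvalues_connected[OF three] by blast
next
  case True
  then obtain x y where disconnected: "\<not> E\<^sup>*\<^sup>* x y"
    using not_connected_if_sum_zero_eigenvector[of E k] E_regular by blast
  interpret strongly_deza_graph_clique_child E n k b a nB kB lB mB
    using a_eq_0_and_mB_eq_0_if_disconnected[OF disconnected] by unfold_locales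
  show ?thesis
    using three_eigenvalues_clique_child[OF three] two_le_card_components[OF disconnected] by blast
qed

end

theorem proposition1:
  fixes E :: "'a::finite \<Rightarrow> 'a \<Rightarrow> bool" and n k b a :: nat
  assumes "strongly_deza E n k b a"
  shows "card (eigenvalues E) \<le> 5 \<and>
         (card (eigenvalues E) = 2 \<longrightarrow>
           a = 0 \<and> b = k - 1 \<and> k - 1 \<ge> 1 \<and> card (components E) \<ge> 2 \<and>
           (\<forall>C\<in>components E. card C = k + 1 \<and> complete_on C E)) \<and>
         (card (eigenvalues E) = 3 \<longrightarrow>
           (\<exists>l m. srg_on UNIV E n k l m \<and> {l, m} = {a, b}) \<or>
           (card (components E) \<ge> 2 \<and> (\<forall>C\<in>components E. \<exists>v. srg_on C E v k b b)) \<or>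
           (k \<ge> 2 \<and> (\<forall>C\<in>components E. complete_bipartite_on C E k)))"
proof -
  obtain nB kB lB mB where "srg_on UNIV (childB UNIV E b a) nB kB lB mB"
    using assms by (auto simp: strongly_deza_def)
  then interpret strongly_deza_graph E n k b a nB kB lB mB
    using assms by unfold_locales
  show ?thesis
    unfolding eigenvalues_eq_adj_eigenvalues
    using card_eigenvalues_le_5 two_eigenvalues three_eigenvalues by blast
qed

end
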